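(* Let $n\ge1$, $d\ge2$. The elements $\delta_0,\dots,\delta_n\in\pi_1(\mathcal U_{n,d},[x_0^d+\cdots+x_n^d])$ pairwise commute and satisfy $\delta_0\delta_1\cdots\delta_n=1$.
   Context: $\mathcal U_{n,d}\subset\mathbf P^{N-1}$ is the complement of the discriminant in the projective space of degree-$d$ forms in $x_0,\dots,x_n$ (forms defining singular hypersurfaces removed). For $\kappa=0,\dots,n$, $\delta_\kappa$ is the class of the loop $t\in[0,2\pi]\mapsto\big[e^{it}x_\kappa^d+\sum_{\lambda\ne\kappa}x_\lambda^d\big]$ in the Fermat family $\{[a_0x_0^d+\cdots+a_nx_n^d]\}$. *)

theory Defs
  imports "HOL-Analysis.Analysis"
begin

definition deg_monos :: "nat \<Rightarrow> nat \<Rightarrow> (nat \<Rightarrow> nat) set" where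
  "deg_monos n d = {\<alpha>. (\<forall>v>n. \<alpha> v = 0) \<and> sum \<alpha> {0..n} = d}"

definition is_form :: "nat \<Rightarrow> nat \<Rightarrow> ((nat \<Rightarrow> nat) \<Rightarrow> complex) \<Rightarrow> bool" where
  "is_form n d F \<longleftrightarrow> (\<forall>\<alpha>. \<alpha> \<notin> deg_monos n d \<longrightarrow> F \<alpha> = 0)"

definition form_eval :: "nat \<Rightarrow> nat \<Rightarrow> ((nat \<Rightarrow> nat) \<Rightarrow> complex) \<Rightarrow> (nat \<Rightarrow> complex) \<Rightarrow> complex" where
  "form_eval n d F x = (\<Sum>\<alpha>\<in>deg_monos n d. F \<alpha> * (\<Prod>v\<in>{0..n}. x v ^ \<alpha> v))"

definition singular_form :: "nat \<Rightarrow> nat \<Rightarrow> ((nat \<Rightarrow> nat) \<Rightarrow> complex) \<Rightarrow> bool" where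
  "singular_form n d F \<longleftrightarrow>
     (\<exists>x. (\<exists>v\<le>n. x v \<noteq> 0) \<and>
          (\<forall>v\<le>n. ((\<lambda>t. form_eval n d F (x(v := t))) has_field_derivative 0) (at (x v))))"

text \<open>Projective point [F] realized (homeomorphically) as the rank-one Hermitian projector
  F F^* / |F|^2; this embeds P^{N-1} into a space of matrices.\<close>
definition proj :: "nat \<Rightarrow> nat \<Rightarrow> ((nat \<Rightarrow> nat) \<Rightarrow> complex) \<Rightarrow> ((nat \<Rightarrow> nat) \<times> (nat \<Rightarrow> nat) \<Rightarrow> complex)" where
  "proj n d F = (\<lambda>(\<alpha>, \<beta>). F \<alpha> * cnj (F \<beta>) / complex_of_real (\<Sum>\<gamma>\<in>deg_monos n d. (cmod (F \<gamma>))\<^sup>2))"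

definition U_nd :: "nat \<Rightarrow> nat \<Rightarrow> ((nat \<Rightarrow> nat) \<times> (nat \<Rightarrow> nat) \<Rightarrow> complex) set" where
  "U_nd n d = proj n d ` {F. is_form n d F \<and> F \<noteq> (\<lambda>_. 0) \<and> \<not> singular_form n d F}"

definition fermat :: "nat \<Rightarrow> nat \<Rightarrow> (nat \<Rightarrow> complex) \<Rightarrow> ((nat \<Rightarrow> nat) \<Rightarrow> complex)" where
  "fermat n d a = (\<lambda>\<alpha>. \<Sum>v\<in>{0..n}. if \<alpha> = (\<lambda>w. if w = v then d else 0) then a v else 0)"

definition base_pt :: "nat \<Rightarrow> nat \<Rightarrow> ((nat \<Rightarrow> nat) \<times> (nat \<Rightarrow> nat) \<Rightarrow> complex)" where
  "base_pt n d = proj n d (fermat n d (\<lambda>_. 1))"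

text \<open>The loop delta_kappa, reparametrized from [0,2pi] to [0,1].\<close>
definition delta :: "nat \<Rightarrow> nat \<Rightarrow> nat \<Rightarrow> real \<Rightarrow> ((nat \<Rightarrow> nat) \<times> (nat \<Rightarrow> nat) \<Rightarrow> complex)" where
  "delta n d \<kappa> = (\<lambda>t. proj n d (fermat n d (\<lambda>v. if v = \<kappa> then exp (2 * pi * \<i> * complex_of_real t) else 1)))"

fun delta_prod :: "nat \<Rightarrow> nat \<Rightarrow> nat \<Rightarrow> real \<Rightarrow> ((nat \<Rightarrow> nat) \<times> (nat \<Rightarrow> nat) \<Rightarrow> complex)" where
  "delta_prod n d 0 = delta n d 0"
| "delta_prod n d (Suc k) = delta_prod n d k +++ delta n d (Suc k)"

end

theory Submission
  imports Defs
begin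

(* Writing e(t) = exp (2 pi i t), every loop in question lies in the image of the map
   theta |-> [sum_v e(theta_v) x_v^d] from R^(n+1) into U_{n,d}; Fermat forms with nonzero
   coefficients are smooth.  This map is invariant under integer translations and constant
   along the diagonal, because rescaling a form does not change the point it defines.
   delta_kappa is the image of a unit segment in direction e_kappa starting at any integer
   point, so concatenations of the delta's lift to concatenations of segments.  As R^(n+1) is
   contractible, lifts with equal endpoints give homotopic paths: delta_i delta_j and
   delta_j delta_i both lift to paths from 0 to e_i + e_j, and delta_0 ... delta_n lifts to a
   path from 0 to (1,...,1), homotopic to the diagonal, whose image is constant. *)

definition mono_power :: "nat \<Rightarrow> nat \<Rightarrow> nat \<Rightarrow> nat" where
  "mono_power d v = (\<lambda>w. if w = v then d else 0)"

lemma mono_power_eq_iff: "d \<noteq> 0 \<Longrightarrow> mono_power d v = mono_power d w \<longleftrightarrow> v = w"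
  unfolding mono_power_def by (metis less_numeral_extra(3))

lemma mono_power_in_deg_monos: "v \<le> n \<Longrightarrow> mono_power d v \<in> deg_monos n d"
  unfolding deg_monos_def mono_power_def by auto

lemma finite_deg_monos: "finite (deg_monos n d)"
proof -
  have "deg_monos n d \<subseteq> {f. \<forall>x. (x \<in> {0..n} \<longrightarrow> f x \<in> {0..d}) \<and> (x \<notin> {0..n} \<longrightarrow> f x = 0)}"
  proof safe
    fix f x assume f: "f \<in> deg_monos n d" and x: "x \<in> {0..n}"
    then have "f x \<le> sum f {0..n}" by (intro member_le_sum) auto
    then show "f x \<in> {0..d}" using f by (auto simp: deg_monos_def)
  qed (auto simp: deg_monos_def)
  then show ?thesis by (rule finite_subset) (intro finite_set_of_finite_funs, auto)
qed

lemma fermat_mono_power: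
  assumes "d \<noteq> 0" "v \<le> n"
  shows "fermat n d a (mono_power d v) = a v"
  using assms mono_power_eq_iff[OF assms(1)]
  by (simp add: fermat_def mono_power_def[symmetric] if_distrib cong: if_cong)

lemma fermat_eq_0:
  "(\<And>v. v \<le> n \<Longrightarrow> \<alpha> \<noteq> mono_power d v) \<Longrightarrow> fermat n d a \<alpha> = 0"
  unfolding fermat_def mono_power_def[symmetric] by (intro sum.neutral) auto

lemma is_form_fermat: "is_form n d (fermat n d a)"
  unfolding is_form_def using mono_power_in_deg_monos by (blast intro: fermat_eq_0)

lemma fermat_cong: "(\<And>v. v \<le> n \<Longrightarrow> a v = b v) \<Longrightarrow> fermat n d a = fermat n d b"
  unfolding fermat_def by (intro ext sum.cong) auto

lemma fermat_scale: "fermat n d (\<lambda>v. c * a v) = (\<lambda>\<alpha>. c * fermat n d a \<alpha>)"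
  unfolding fermat_def by (auto simp: sum_distrib_left intro!: ext sum.cong)

lemma form_eval_fermat:
  assumes "d \<noteq> 0"
  shows "form_eval n d (fermat n d a) x = (\<Sum>v\<in>{0..n}. a v * x v ^ d)"
proof -
  have "form_eval n d (fermat n d a) x =
      (\<Sum>\<alpha>\<in>mono_power d ` {0..n}. fermat n d a \<alpha> * (\<Prod>w\<in>{0..n}. x w ^ \<alpha> w))"
    unfolding form_eval_def
    by (rule sum.mono_neutral_right) (auto simp: finite_deg_monos mono_power_in_deg_monos intro!: fermat_eq_0)
  also have "\<dots> = (\<Sum>v\<in>{0..n}. fermat n d a (mono_power d v) * (\<Prod>w\<in>{0..n}. x w ^ mono_power d v w))"
    by (rule sum.reindex_cong[where l="mono_power d"]) (auto simp: inj_on_def mono_power_eq_iff[OF assms])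
  also have "\<dots> = (\<Sum>v\<in>{0..n}. a v * x v ^ d)"
  proof (rule sum.cong)
    fix v assume v: "v \<in> {0..n}"
    have "(\<Prod>w\<in>{0..n}. x w ^ mono_power d v w) = (\<Prod>w\<in>{0..n}. if w = v then x w ^ d else 1)"
      by (rule prod.cong) (auto simp: mono_power_def)
    then show "fermat n d a (mono_power d v) * (\<Prod>w\<in>{0..n}. x w ^ mono_power d v w) = a v * x v ^ d"
      using v fermat_mono_power[OF assms] by simp
  qed simp
  finally show ?thesis .
qed

lemma fermat_not_singular:
  assumes "d \<noteq> 0" and a: "\<And>v. v \<le> n \<Longrightarrow> a v \<noteq> 0"
  shows "\<not> singular_form n d (fermat n d a)"
proof
  assume "singular_form n d (fermat n d a)"
  then obtain x where nz: "\<exists>v\<le>n. x v \<noteq> 0" and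
    der: "\<And>v. v \<le> n \<Longrightarrow>
      ((\<lambda>t. form_eval n d (fermat n d a) (x(v := t))) has_field_derivative 0) (at (x v))"
    unfolding singular_form_def by blast
  have "x v = 0" if v: "v \<le> n" for v
  proof -
    define r where "r = (\<Sum>w\<in>{0..n}-{v}. a w * x w ^ d)"
    have "form_eval n d (fermat n d a) (x(v := t)) = a v * t ^ d + r" for t
    proof -
      have "(\<Sum>w\<in>{0..n}-{v}. a w * (x(v := t)) w ^ d) = r"
        unfolding r_def by (rule sum.cong) auto
      then show ?thesis
        using v by (simp add: form_eval_fermat[OF assms(1)] sum.remove[of _ v])
    qed
    then have "((\<lambda>t. a v * t ^ d + r) has_field_derivative 0) (at (x v))"
      using der[OF v] by simp
    moreover have "((\<lambda>t. a v * t ^ d + r) has_field_derivative a v * (of_nat d * x v ^ (d - 1))) (at (x v))"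
      by (auto intro!: derivative_eq_intros)
    ultimately have "a v * (of_nat d * x v ^ (d - 1)) = 0"
      using DERIV_unique by blast
    then show "x v = 0" using assms v by auto
  qed
  then show False using nz by blast
qed

lemma proj_fermat_in_U_nd:
  assumes "d \<noteq> 0" and "\<And>v. v \<le> n \<Longrightarrow> a v \<noteq> 0"
  shows "proj n d (fermat n d a) \<in> U_nd n d"
proof -
  have "fermat n d a \<noteq> (\<lambda>_. 0)"
    using fermat_mono_power[OF assms(1), of 0 n a] assms(2)[of 0] by auto
  moreover have "\<not> singular_form n d (fermat n d a)"
    using assms by (rule fermat_not_singular)
  ultimately show ?thesis
    unfolding U_nd_def using is_form_fermat by blast
qed

lemma continuous_on_fermat:
  assumes "\<And>v. continuous_on S (\<lambda>s. a s v)"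
  shows "continuous_on S (\<lambda>s. fermat n d (a s))"
proof (rule continuous_on_coordinatewise_then_product)
  fix \<alpha>
  show "continuous_on S (\<lambda>s. fermat n d (a s) \<alpha>)"
    unfolding fermat_def sum.inter_filter[OF finite_atLeastAtMost, symmetric]
    by (intro continuous_intros assms)
qed

lemma proj_scale:
  assumes "c \<noteq> 0"
  shows "proj n d (\<lambda>\<alpha>. c * F \<alpha>) = proj n d F"
proof -
  define r where "r = complex_of_real ((cmod c)\<^sup>2)"
  have r: "r \<noteq> 0" "c * cnj c = r"
    using assms by (simp_all add: r_def flip: complex_norm_square)
  have denominator: "complex_of_real (\<Sum>\<gamma>\<in>deg_monos n d. (cmod (c * F \<gamma>))\<^sup>2)
      = r * complex_of_real (\<Sum>\<gamma>\<in>deg_monos n d. (cmod (F \<gamma>))\<^sup>2)"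
    by (simp add: r_def norm_mult power_mult_distrib sum_distrib_left)
  have numerator: "c * F \<alpha> * cnj (c * F \<beta>) = r * (F \<alpha> * cnj (F \<beta>))" for \<alpha> \<beta>
    by (simp flip: r(2) add: ac_simps)
  show ?thesis
    unfolding proj_def denominator numerator mult_divide_mult_cancel_left[OF r(1)] ..
qed

lemma continuous_on_proj:
  "continuous_on {F. \<exists>\<gamma>\<in>deg_monos n d. F \<gamma> \<noteq> 0} (proj n d)"
proof (rule continuous_on_coordinatewise_then_product)
  fix i :: "(nat \<Rightarrow> nat) \<times> (nat \<Rightarrow> nat)"
  have coordinate: "continuous_on A (\<lambda>F. F \<gamma>)" for A and \<gamma> :: "nat \<Rightarrow> nat"
    by (rule continuous_on_subset[OF continuous_on_product_coordinates]) simp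
  have nonzero: "complex_of_real (\<Sum>\<gamma>\<in>deg_monos n d. (cmod (F \<gamma>))\<^sup>2) \<noteq> 0"
    if "\<gamma> \<in> deg_monos n d" "F \<gamma> \<noteq> 0" for F :: "(nat \<Rightarrow> nat) \<Rightarrow> complex" and \<gamma>
    using that by (simp only: of_real_eq_0_iff) (auto simp: sum_nonneg_eq_0_iff finite_deg_monos)
  show "continuous_on {F. \<exists>\<gamma>\<in>deg_monos n d. F \<gamma> \<noteq> 0} (\<lambda>F. proj n d F i)"
    unfolding proj_def prod.case_eq_if
    by (intro continuous_intros coordinate) (use nonzero in blast)
qed

definition fermat_point :: "nat \<Rightarrow> nat \<Rightarrow> (nat \<Rightarrow> real) \<Rightarrow> (nat \<Rightarrow> nat) \<times> (nat \<Rightarrow> nat) \<Rightarrow> complex" where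
  "fermat_point n d \<theta> = proj n d (fermat n d (\<lambda>v. exp (2 * pi * \<i> * complex_of_real (\<theta> v))))"

lemma fermat_point_in_U_nd: "d \<noteq> 0 \<Longrightarrow> fermat_point n d \<theta> \<in> U_nd n d"
  unfolding fermat_point_def by (rule proj_fermat_in_U_nd) auto

lemma continuous_on_fermat_point:
  assumes "d \<noteq> 0"
  shows "continuous_on UNIV (fermat_point n d)"
proof -
  let ?F = "\<lambda>\<theta>. fermat n d (\<lambda>v. exp (2 * pi * \<i> * complex_of_real (\<theta> v)))"
  have "continuous_on UNIV (\<lambda>\<theta> :: nat \<Rightarrow> real. \<theta> v)" for v
    by simp
  then have "continuous_on UNIV ?F"
    by (intro continuous_on_fermat continuous_intros)
  moreover have "?F ` UNIV \<subseteq> {F. \<exists>\<gamma>\<in>deg_monos n d. F \<gamma> \<noteq> 0}"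
  proof -
    have "?F \<theta> (mono_power d 0) \<noteq> 0" for \<theta>
      using fermat_mono_power[OF assms, of 0 n] by simp
    then show ?thesis
      using mono_power_in_deg_monos[of 0 n d] by blast
  qed
  ultimately show ?thesis
    unfolding fermat_point_def[abs_def] by (rule continuous_on_compose2[OF continuous_on_proj])
qed

lemma fermat_point_eqI:
  assumes "\<And>v. v \<le> n \<Longrightarrow> \<theta> v - \<theta>' v \<in> \<int>"
  shows "fermat_point n d \<theta> = fermat_point n d \<theta>'"
  unfolding fermat_point_def
proof (intro arg_cong[where f="proj n d"] fermat_cong)
  fix v assume "v \<le> n"
  then obtain k where "\<theta> v = \<theta>' v + of_int k"
    using assms by (metis Ints_cases add_diff_cancel_left' diff_add_cancel)
  then show "exp (2 * pi * \<i> * complex_of_real (\<theta> v)) = exp (2 * pi * \<i> * complex_of_real (\<theta>' v))"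
    unfolding exp_eq by (intro exI[of _ k]) (simp add: algebra_simps)
qed

lemma fermat_point_const:
  assumes "\<And>v. v \<le> n \<Longrightarrow> \<theta> v = t"
  shows "fermat_point n d \<theta> = base_pt n d"
proof -
  let ?c = "exp (2 * pi * \<i> * complex_of_real t)"
  have "fermat_point n d \<theta> = proj n d (fermat n d (\<lambda>v. ?c * 1))"
    unfolding fermat_point_def using assms by (intro arg_cong[where f="proj n d"] fermat_cong) auto
  also have "\<dots> = base_pt n d"
    unfolding fermat_scale base_pt_def by (rule proj_scale) simp
  finally show ?thesis .
qed

lemma homotopic_paths_UNIV_fun:
  fixes p q :: "real \<Rightarrow> 'a \<Rightarrow> 'b::real_normed_vector"
  assumes "path p" "path q" "pathstart p = pathstart q" "pathfinish p = pathfinish q"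
  shows "homotopic_paths UNIV p q"
  unfolding homotopic_paths
proof (intro exI conjI)
  let ?S = "{0..1::real} \<times> {0..1::real}"
  let ?h = "\<lambda>z v. (1 - fst z) *\<^sub>R p (snd z) v + fst z *\<^sub>R q (snd z) v"
  have "continuous_on ?S (\<lambda>z. r (snd z) v)" if "path r" for r :: "real \<Rightarrow> 'a \<Rightarrow> 'b" and v
    using continuous_on_product_then_coordinatewise[OF that[unfolded path_def]]
    by (rule continuous_on_compose2) (auto intro: continuous_intros)
  then show "continuous_on ?S ?h"
    using assms(1,2) by (intro continuous_intros)
  have "p 0 = q 0" "p 1 = q 1"
    using assms(3,4) by (simp_all add: pathstart_def pathfinish_def)
  then show "\<forall>s\<in>{0..1}. pathstart (?h \<circ> Pair s) = pathstart p \<and> pathfinish (?h \<circ> Pair s) = pathfinish p"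
    by (simp add: pathstart_def pathfinish_def scaleR_collapse)
qed auto

lemma homotopic_paths_fermat_point:
  assumes "d \<noteq> 0" "path p" "path q" "pathstart p = pathstart q" "pathfinish p = pathfinish q"
  shows "homotopic_paths (U_nd n d) (fermat_point n d \<circ> p) (fermat_point n d \<circ> q)"
proof (rule homotopic_paths_continuous_image)
  show "homotopic_paths UNIV p q"
    using assms(2-) by (rule homotopic_paths_UNIV_fun)
  show "continuous_on UNIV (fermat_point n d)"
    using assms(1) by (rule continuous_on_fermat_point)
  show "fermat_point n d \<in> UNIV \<rightarrow> U_nd n d"
    using assms(1) fermat_point_in_U_nd by blast
qed

definition delta_lift :: "(nat \<Rightarrow> real) \<Rightarrow> nat \<Rightarrow> real \<Rightarrow> nat \<Rightarrow> real" where
  "delta_lift c \<kappa> t = (\<lambda>v. c v + t * indicator {\<kappa>} v)"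

lemma path_delta_lift: "path (delta_lift c \<kappa>)"
  unfolding path_def delta_lift_def by (intro continuous_intros)

lemma pathstart_delta_lift [simp]: "pathstart (delta_lift c \<kappa>) = c"
  by (simp add: pathstart_def delta_lift_def)

lemma pathfinish_delta_lift [simp]: "pathfinish (delta_lift c \<kappa>) = (\<lambda>v. c v + indicator {\<kappa>} v)"
  by (simp add: pathfinish_def delta_lift_def)

lemma delta_eq_fermat_point_delta_lift:
  assumes "\<And>v. v \<le> n \<Longrightarrow> c v \<in> \<int>"
  shows "delta n d \<kappa> = fermat_point n d \<circ> delta_lift c \<kappa>"
proof
  fix t
  have "delta n d \<kappa> t = fermat_point n d (\<lambda>v. t * indicator {\<kappa>} v)"
    unfolding delta_def fermat_point_def
    by (intro arg_cong[where f="proj n d"] fermat_cong) (simp add: indicator_def)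
  also have "\<dots> = fermat_point n d (delta_lift c \<kappa> t)"
    using assms by (intro fermat_point_eqI) (simp add: delta_lift_def minus_in_Ints_iff)
  finally show "delta n d \<kappa> t = (fermat_point n d \<circ> delta_lift c \<kappa>) t"
    by simp
qed

lemma indicator_in_Ints: "indicator A x \<in> \<int>"
  by (simp add: indicator_def)

lemma homotopic_paths_delta_commute:
  assumes "d \<noteq> 0"
  shows "homotopic_paths (U_nd n d) (delta n d i +++ delta n d j) (delta n d j +++ delta n d i)"
proof -
  define L where "L i j = delta_lift (\<lambda>_. 0) i +++ delta_lift (indicator {i}) j" for i j
  have lift: "delta n d i +++ delta n d j = fermat_point n d \<circ> L i j" for i j
    unfolding L_def path_compose_join
    using delta_eq_fermat_point_delta_lift[of n "\<lambda>_. 0"]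
      delta_eq_fermat_point_delta_lift[of n "indicator {i}"]
    by (simp add: indicator_in_Ints)
  have "path (L i j)" "pathstart (L i j) = (\<lambda>_. 0)"
    "pathfinish (L i j) = (\<lambda>v. indicator {i} v + indicator {j} v)" for i j
    by (simp_all add: L_def path_delta_lift)
  then show ?thesis
    unfolding lift by (intro homotopic_paths_fermat_point[OF assms]) (simp_all add: add.commute)
qed

lemma delta_prod_lift:
  "\<exists>L. path L \<and> pathstart L = (\<lambda>_. 0) \<and> pathfinish L = indicator {..k}
     \<and> delta_prod n d k = fermat_point n d \<circ> L"
proof (induction k)
  case 0
  have "delta_prod n d 0 = fermat_point n d \<circ> delta_lift (\<lambda>_. 0) 0"
    by (simp add: delta_eq_fermat_point_delta_lift)
  moreover have "pathfinish (delta_lift (\<lambda>_. 0) 0) = indicator {..0}"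
    by (auto simp: indicator_def)
  ultimately show ?case
    using path_delta_lift by fastforce
next
  case (Suc k)
  then obtain L where L: "path L" "pathstart L = (\<lambda>_. 0)" "pathfinish L = indicator {..k}"
    and prod: "delta_prod n d k = fermat_point n d \<circ> L"
    by blast
  let ?L = "L +++ delta_lift (indicator {..k}) (Suc k)"
  have "delta_prod n d (Suc k) = fermat_point n d \<circ> ?L"
    using prod delta_eq_fermat_point_delta_lift[of n "indicator {..k}"]
    by (simp add: path_compose_join indicator_in_Ints)
  moreover have "path ?L" "pathstart ?L = (\<lambda>_. 0)"
    using L by (simp_all add: path_delta_lift)
  moreover have "pathfinish ?L = indicator {..Suc k}"
    by (auto simp: indicator_def le_Suc_eq)
  ultimately show ?case
    by blast
qed

lemma homotopic_paths_delta_prod_trivial: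
  assumes "d \<noteq> 0"
  shows "homotopic_paths (U_nd n d) (delta_prod n d n) (\<lambda>_. base_pt n d)"
proof -
  obtain L where L: "path L" "pathstart L = (\<lambda>_. 0)" "pathfinish L = indicator {..n}"
    and prod: "delta_prod n d n = fermat_point n d \<circ> L"
    using delta_prod_lift by blast
  define D where "D t = (\<lambda>v. t * indicator {..n} v)" for t :: real
  have "path D" "pathstart D = (\<lambda>_. 0)" "pathfinish D = indicator {..n}"
    unfolding D_def path_def pathstart_def pathfinish_def by (auto intro!: continuous_intros)
  then have "homotopic_paths (U_nd n d) (fermat_point n d \<circ> L) (fermat_point n d \<circ> D)"
    using L by (intro homotopic_paths_fermat_point[OF assms]) auto
  moreover have "fermat_point n d (D t) = base_pt n d" for t
    by (rule fermat_point_const) (simp add: D_def)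
  ultimately show ?thesis
    by (simp add: prod comp_def)
qed

theorem mainTheorem17:
  fixes n d :: nat
  assumes "n \<ge> 1" and "d \<ge> 2"
  shows "(\<forall>i\<le>n. \<forall>j\<le>n. homotopic_paths (U_nd n d)
            (delta n d i +++ delta n d j) (delta n d j +++ delta n d i))
       \<and> homotopic_paths (U_nd n d) (delta_prod n d n) (\<lambda>_. base_pt n d)"
proof -
  have "d \<noteq> 0"
    using assms(2) by simp
  then show ?thesis
    using homotopic_paths_delta_commute homotopic_paths_delta_prod_trivial by blast
qed

end
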